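(* Let $(N_1(t))_{t\ge 0}$ be a standard (homogeneous) Poisson process with rate $1$, let $\lambda:[0,\infty)\to(0,\infty)$ be locally integrable, and set $\Lambda(s,t)=\int_s^t\lambda(\tau)\,d\tau$, $\Lambda(t)=\Lambda(0,t)$, with $\Lambda(t)\to\infty$ as $t\to\infty$. Let $\alpha\in(0,1)$, let $(L_\alpha(t))_{t\ge0}$ be an $\alpha$-stable subordinator, i.e. a Lévy process with $\mathbb{E}[e^{-uL_\alpha(t)}]=e^{-tu^\alpha}$, and let $Y_\alpha(t)=\inf\{u\ge0: L_\alpha(u)>t\}$ be its inverse, assumed independent of $N_1$. Define the fractional non-homogeneous Poisson process $N_\alpha(t)=N_1(\Lambda(Y_\alpha(t)))$. Let $\mathcal{F}_0=\sigma(\{Y_\alpha(t),t\ge0\})$, $\mathcal{F}^{N_\alpha}_t=\sigma(\{N_\alpha(s):s\le t\})$ and $\mathcal{F}_t=\mathcal{F}_0\vee\mathcal{F}^{N_\alpha}_t$. Then $(N_\alpha(t))_{t\ge0}$ is an $(\mathcal{F}_t)$-Cox process directed by $(\Lambda(Y_\alpha(t)))_{t\ge0}$; in particular, for all $0\le s\le t$ and $u\in\mathbb{R}$, $$\mathbb{E}\big[e^{iu(N_\alpha(t)-N_\alpha(s))}\,\big|\,\mathcal{F}_s\big]=\exp\big[(\Lambda(Y_\alpha(t))-\Lambda(Y_\alpha(s)))(e^{iu}-1)\big]\quad\text{a.s.},$$ so that, conditionally on $\mathcal{F}_s$, $N_\alpha(t)-N_\alpha(s)$ is Poisson distributed with parameter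 $\Lambda(Y_\alpha(t))-\Lambda(Y_\alpha(s))$.
   Context: A point process $(N(t))_{t\ge0}$ adapted to a filtration $(\mathcal{F}^N_t)$ is called an $(\mathcal{F}_t)$-Cox process directed by a right-continuous increasing process $(A(t))_{t\ge0}$ if, with $\mathcal{F}_0=\sigma(A(t),t\ge0)$ and $\mathcal{F}_t=\mathcal{F}_0\vee\mathcal{F}^N_t$, conditionally on $(\mathcal{F}_t)$ the process $N$ is a Poisson process with intensity measure $dA(t)$ (i.e. it has conditionally independent increments with $N(t)-N(s)$ conditionally Poisson with parameter $A(t)-A(s)$). *)

theory Defs
  imports "HOL-Probability.Probability"
begin

definition indep_increments ::
  "'a measure \<Rightarrow> (real \<Rightarrow> 'a \<Rightarrow> real) \<Rightarrow> bool" where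
  "indep_increments M X \<longleftrightarrow>
     (\<forall>(ts :: nat \<Rightarrow> real) (n :: nat). 0 \<le> ts 0 \<longrightarrow> (\<forall>i<n. ts i \<le> ts (Suc i)) \<longrightarrow>
        prob_space.indep_vars M (\<lambda>_. borel) (\<lambda>i \<omega>. X (ts (Suc i)) \<omega> - X (ts i) \<omega>) {..<n})"

definition std_poisson_process :: "'a measure \<Rightarrow> (real \<Rightarrow> 'a \<Rightarrow> nat) \<Rightarrow> bool" where
  "std_poisson_process M N \<longleftrightarrow>
     prob_space M \<and>
     (\<forall>t. N t \<in> measurable M (count_space UNIV)) \<and>
     (\<forall>\<omega>\<in>space M. N 0 \<omega> = 0) \<and>
     (\<forall>\<omega>\<in>space M. \<forall>s t. 0 \<le> s \<longrightarrow> s \<le> t \<longrightarrow> N s \<omega> \<le> N t \<omega>) \<and>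
     (\<forall>\<omega>\<in>space M. \<forall>t\<ge>0. continuous (at_right t) (\<lambda>s. real (N s \<omega>))) \<and>
     indep_increments M (\<lambda>t \<omega>. real (N t \<omega>)) \<and>
     (\<forall>s t (k::nat). 0 \<le> s \<longrightarrow> s \<le> t \<longrightarrow>
        measure M {\<omega>\<in>space M. N t \<omega> - N s \<omega> = k} = (t - s) ^ k / fact k * exp (-(t - s)))"

definition levy_process :: "'a measure \<Rightarrow> (real \<Rightarrow> 'a \<Rightarrow> real) \<Rightarrow> bool" where
  "levy_process M X \<longleftrightarrow>
     prob_space M \<and>
     (\<forall>t. X t \<in> borel_measurable M) \<and>
     (\<forall>\<omega>\<in>space M. X 0 \<omega> = 0) \<and>
     (\<forall>\<omega>\<in>space M. \<forall>t\<ge>0. continuous (at_right t) (\<lambda>s. X s \<omega>)) \<and>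
     (\<forall>\<omega>\<in>space M. \<forall>t>0. \<exists>l. ((\<lambda>s. X s \<omega>) \<longlongrightarrow> l) (at_left t)) \<and>
     indep_increments M X \<and>
     (\<forall>s t. 0 \<le> s \<longrightarrow> s \<le> t \<longrightarrow>
        distr M borel (\<lambda>\<omega>. X t \<omega> - X s \<omega>) = distr M borel (X (t - s)))"

definition stable_subordinator :: "real \<Rightarrow> 'a measure \<Rightarrow> (real \<Rightarrow> 'a \<Rightarrow> real) \<Rightarrow> bool" where
  "stable_subordinator \<alpha> M L \<longleftrightarrow>
     levy_process M L \<and>
     (\<forall>\<omega>\<in>space M. \<forall>s t. 0 \<le> s \<longrightarrow> s \<le> t \<longrightarrow> L s \<omega> \<le> L t \<omega>) \<and>
     (\<forall>t u. 0 \<le> t \<longrightarrow> 0 \<le> u \<longrightarrow>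
        prob_space.expectation M (\<lambda>\<omega>. exp (- u * L t \<omega>)) = exp (- t * u powr \<alpha>))"

definition inverse_subordinator :: "(real \<Rightarrow> 'a \<Rightarrow> real) \<Rightarrow> real \<Rightarrow> 'a \<Rightarrow> real" where
  "inverse_subordinator L t \<omega> = Inf {u. 0 \<le> u \<and> t < L u \<omega>}"

definition cum_intensity :: "(real \<Rightarrow> real) \<Rightarrow> real \<Rightarrow> real" where
  "cum_intensity lam t = (LINT \<tau>:{0..t}|lborel. lam \<tau>)"

definition gen_sigma ::
  "'a measure \<Rightarrow> 'i set \<Rightarrow> ('i \<Rightarrow> 'a \<Rightarrow> 'b) \<Rightarrow> 'b measure \<Rightarrow> 'a measure" where
  "gen_sigma M I X N = sigma (space M) {X i -` B \<inter> space M | i B. i \<in> I \<and> B \<in> sets N}"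

text \<open>(F_t)-Cox process directed by A: N is adapted, A is F_0 measurable, and
  conditionally on F_s the increment N(t) - N(s) is Poisson with parameter A(t) - A(s)
  (this yields conditionally independent Poisson increments given F_0).\<close>
definition cox_process ::
  "'a measure \<Rightarrow> (real \<Rightarrow> 'a measure) \<Rightarrow> (real \<Rightarrow> 'a \<Rightarrow> nat) \<Rightarrow> (real \<Rightarrow> 'a \<Rightarrow> real) \<Rightarrow> bool" where
  "cox_process M F N A \<longleftrightarrow>
     (\<forall>t\<ge>0. subalgebra M (F t)) \<and>
     (\<forall>s t. 0 \<le> s \<longrightarrow> s \<le> t \<longrightarrow> sets (F s) \<subseteq> sets (F t)) \<and>
     (\<forall>t\<ge>0. N t \<in> measurable (F t) (count_space UNIV)) \<and>
     (\<forall>t\<ge>0. A t \<in> borel_measurable (F 0)) \<and>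
     (AE \<omega> in M. \<forall>s t. 0 \<le> s \<longrightarrow> s \<le> t \<longrightarrow> A s \<omega> \<le> A t \<omega>) \<and>
     (AE \<omega> in M. \<forall>t\<ge>0. continuous (at_right t) (\<lambda>s. A s \<omega>)) \<and>
     (\<forall>s t (k::nat). 0 \<le> s \<longrightarrow> s \<le> t \<longrightarrow>
        (AE \<omega> in M. real_cond_exp M (F s)
              (indicator {\<omega>. int (N t \<omega>) - int (N s \<omega>) = int k}) \<omega>
            = (A t \<omega> - A s \<omega>) ^ k / fact k * exp (-(A t \<omega> - A s \<omega>))))"

end

theory Submission
  imports Defs
begin

(*
  Conditionally on the clock Y, the process N_alpha is the unit Poisson process N_1 read at the
  times Lambda(Y(t)). The sigma-algebra F_s is generated by the intersection-stable family of
  events E \<inter> {N_alpha(c_i) = k_i} with E in sigma(Y) and c_i <= s, so it suffices to compute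
  E[1_D h(N_alpha(t) - N_alpha(s))] for such D. As sigma(Y) and sigma(N_1) are independent, one may
  integrate over N_1 with the clock frozen. For a frozen clock Lambda(Y(.)) is nondecreasing, so all
  conditioning times lie below Lambda(Y(s)), and the independence of Poisson increments factors the
  expectation into the probability of the conditioning event times sum_k h(k) e^(-mu) mu^k / k!
  with mu = Lambda(Y(t)) - Lambda(Y(s)).
  Taking h an indicator, a cosine or a sine gives the Cox property and the conditional characteristic
  function. The clock is almost surely well behaved: the Laplace transform makes L unbounded, so Y
  is finite, nondecreasing and right-continuous.
*)

section \<open>Independence and conditional expectation\<close>

lemma (in prob_space) integral_indep_subalgebras:
  fixes F :: "'a \<Rightarrow> 'a \<Rightarrow> real"
  assumes G: "subalgebra M G" and H: "subalgebra M H"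
    and indep: "indep_set (sets G) (sets H)"
    and F[measurable]: "case_prod F \<in> borel_measurable (G \<Otimes>\<^sub>M H)"
    and bounded: "\<And>y z. \<bar>F y z\<bar> \<le> B"
  shows "(\<integral>\<omega>. F \<omega> \<omega> \<partial>M) = (\<integral>y. (\<integral>z. F y z \<partial>M) \<partial>M)"
    and "(\<lambda>y. \<integral>z. F y z \<partial>M) \<in> borel_measurable G"
proof -
  have id_G[measurable]: "(\<lambda>\<omega>. \<omega>) \<in> measurable M G" and id_H[measurable]: "(\<lambda>\<omega>. \<omega>) \<in> measurable M H"
    using G H by (auto simp: subalgebra_def measurable_def sets.sets_into_space)
  interpret PG: prob_space "distr M G (\<lambda>\<omega>. \<omega>)" by (rule prob_space_distr) simp
  interpret PH: prob_space "distr M H (\<lambda>\<omega>. \<omega>)" by (rule prob_space_distr) simp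
  interpret GH: pair_prob_space "distr M G (\<lambda>\<omega>. \<omega>)" "distr M H (\<lambda>\<omega>. \<omega>)" ..
  have sigma_sets_id: "sigma_sets (space M) {A \<inter> space M |A. A \<in> sets K} = sets K"
    if "subalgebra M K" for K
  proof -
    have "A \<inter> space M = A" if "A \<in> sets K" for A
      using sets.sets_into_space[OF that] \<open>subalgebra M K\<close> by (auto simp: subalgebra_def)
    then have "{A \<inter> space M |A. A \<in> sets K} = sets K"
      by (auto intro!: exI)
    then show ?thesis
      using that sigma_algebra.sigma_sets_eq[OF sets.sigma_algebra_axioms[of K]]
      by (simp add: subalgebra_def)
  qed
  have "indep_var G (\<lambda>\<omega>. \<omega>) H (\<lambda>\<omega>. \<omega>)"
    unfolding indep_var_eq using indep by (simp add: sigma_sets_id[OF G] sigma_sets_id[OF H])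
  then have joint: "distr M G (\<lambda>\<omega>. \<omega>) \<Otimes>\<^sub>M distr M H (\<lambda>\<omega>. \<omega>) = distr M (G \<Otimes>\<^sub>M H) (\<lambda>\<omega>. (\<omega>, \<omega>))"
    by (simp add: indep_var_distribution_eq)
  have sets_GH: "sets (distr M G (\<lambda>\<omega>. \<omega>) \<Otimes>\<^sub>M distr M H (\<lambda>\<omega>. \<omega>)) = sets (G \<Otimes>\<^sub>M H)"
    by (rule sets_pair_measure_cong) simp_all
  have sets_GH': "sets (G \<Otimes>\<^sub>M distr M H (\<lambda>\<omega>. \<omega>)) = sets (G \<Otimes>\<^sub>M H)"
    by (rule sets_pair_measure_cong) simp_all
  have inner: "(\<integral>z. F y z \<partial>distr M H (\<lambda>\<omega>. \<omega>)) = (\<integral>z. F y z \<partial>M)" if "y \<in> space G" for y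
    by (rule integral_distr[OF id_H]) (use measurable_Pair2[OF F that] in simp)
  have "(\<lambda>y. \<integral>z. F y z \<partial>distr M H (\<lambda>\<omega>. \<omega>)) \<in> borel_measurable G"
    by (rule PH.borel_measurable_lebesgue_integral) (simp only: measurable_cong_sets[OF sets_GH' refl] F)
  then show meas: "(\<lambda>y. \<integral>z. F y z \<partial>M) \<in> borel_measurable G"
    by (rule measurable_cong[THEN iffD1, rotated]) (simp add: inner)
  have "(\<integral>\<omega>. F \<omega> \<omega> \<partial>M) = (\<integral>p. case_prod F p \<partial>distr M (G \<Otimes>\<^sub>M H) (\<lambda>\<omega>. (\<omega>, \<omega>)))"
    by (subst integral_distr) simp_all
  also have "\<dots> = (\<integral>y. (\<integral>z. F y z \<partial>distr M H (\<lambda>\<omega>. \<omega>)) \<partial>distr M G (\<lambda>\<omega>. \<omega>))"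
    unfolding joint[symmetric]
    by (rule GH.integral_fst'[symmetric, where f="case_prod F", simplified])
       (rule GH.P.integrable_const_bound[where B=B],
        auto simp: bounded measurable_cong_sets[OF sets_GH refl])
  also have "\<dots> = (\<integral>y. (\<integral>z. F y z \<partial>M) \<partial>distr M G (\<lambda>\<omega>. \<omega>))"
    by (rule Bochner_Integration.integral_cong) (simp_all add: inner)
  also have "\<dots> = (\<integral>y. (\<integral>z. F y z \<partial>M) \<partial>M)"
    by (rule integral_distr[OF id_G meas])
  finally show "(\<integral>\<omega>. F \<omega> \<omega> \<partial>M) = (\<integral>y. (\<integral>z. F y z \<partial>M) \<partial>M)" .
qed

lemma (in prob_space) integral_mult_indep_cong:
  fixes X Y f g :: "'a \<Rightarrow> real"
  assumes indep: "indep_var borel X borel Y"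
    and f: "\<And>\<omega>. \<omega> \<in> space M \<Longrightarrow> X \<omega> = f \<omega>" and g: "\<And>\<omega>. \<omega> \<in> space M \<Longrightarrow> Y \<omega> = g \<omega>"
    and bounded: "\<And>\<omega>. \<bar>X \<omega>\<bar> \<le> B1" "\<And>\<omega>. \<bar>Y \<omega>\<bar> \<le> B2"
  shows "(\<integral>\<omega>. f \<omega> * g \<omega> \<partial>M) = (\<integral>\<omega>. f \<omega> \<partial>M) * (\<integral>\<omega>. g \<omega> \<partial>M)"
proof -
  have "integrable M X"
    using indep_var_rv1[OF indep] bounded(1) by (intro integrable_const_bound[where B=B1]) auto
  moreover have "integrable M Y"
    using indep_var_rv2[OF indep] bounded(2) by (intro integrable_const_bound[where B=B2]) auto
  ultimately have "(\<integral>\<omega>. X \<omega> * Y \<omega> \<partial>M) = (\<integral>\<omega>. X \<omega> \<partial>M) * (\<integral>\<omega>. Y \<omega> \<partial>M)"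
    by (rule indep_var_lebesgue_integral[OF indep])
  moreover have "(\<integral>\<omega>. X \<omega> * Y \<omega> \<partial>M) = (\<integral>\<omega>. f \<omega> * g \<omega> \<partial>M)"
    "(\<integral>\<omega>. X \<omega> \<partial>M) = (\<integral>\<omega>. f \<omega> \<partial>M)" "(\<integral>\<omega>. Y \<omega> \<partial>M) = (\<integral>\<omega>. g \<omega> \<partial>M)"
    using f g by (auto intro: Bochner_Integration.integral_cong)
  ultimately show ?thesis by simp
qed

lemma (in prob_space) real_cond_exp_eq_on_generator:
  fixes f g :: "'a \<Rightarrow> real"
  assumes F: "subalgebra M F" and P: "Int_stable P" "P \<subseteq> sets M" "space M \<in> P"
    and generates: "sets F \<subseteq> sigma_sets (space M) P"
    and f: "integrable M f" and g: "integrable M g" and g_F: "g \<in> borel_measurable F"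
    and eq: "\<And>D. D \<in> P \<Longrightarrow> (\<integral>x\<in>D. f x \<partial>M) = (\<integral>x\<in>D. g x \<partial>M)"
  shows "AE x in M. real_cond_exp M F f x = g x"
proof -
  interpret finite_measure_subalgebra M F by unfold_locales (rule F)
  have set_integrable: "set_integrable M D f" "set_integrable M D g" if "D \<in> sets M" for D
    using integrable_mult_indicator[OF that f] integrable_mult_indicator[OF that g]
    unfolding set_integrable_def by simp_all
  show ?thesis
  proof (rule real_cond_exp_charact)
    fix D assume "D \<in> sets F"
    then have D: "D \<in> sigma_sets (space M) P" using generates by auto
    have "P \<subseteq> Pow (space M)" using P(2) sets.sets_into_space by blast
    from P(1) this D show "(\<integral>x\<in>D. f x \<partial>M) = (\<integral>x\<in>D. g x \<partial>M)"
    proof (induct rule: sigma_sets_induct_disjoint)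
      case (basic D) then show ?case by (rule eq)
    next
      case empty then show ?case by (simp add: set_lebesgue_integral_def)
    next
      case (compl D)
      then have D: "D \<in> sets M" using sets.sigma_sets_subset[OF P(2)] by auto
      have "(\<integral>x\<in>space M. k x \<partial>M) = (\<integral>x\<in>D. k x \<partial>M) + (\<integral>x\<in>space M - D. k x \<partial>M)"
        if "k = f \<or> k = g" for k
        using set_integral_Un[of D "space M - D" M k] set_integrable[OF D] set_integrable[of "space M - D"] D
          Un_absorb1[OF sets.sets_into_space[OF D]] that by auto
      from this[of f] this[of g] show ?case using eq[OF P(3)] compl(2) by simp
    next
      case (union D)
      have D: "\<And>i. D i \<in> sets M" using union sets.sigma_sets_subset[OF P(2)] by auto
      have "disjoint_family D" using union(1) .
      then have "(\<integral>x\<in>(\<Union>i. D i). k x \<partial>M) = (\<Sum>i. \<integral>x\<in>D i. k x \<partial>M)" if "k = f \<or> k = g" for k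
        using lebesgue_integral_countable_add[OF D _ set_integrable(1)] lebesgue_integral_countable_add[OF D _ set_integrable(2)]
          D that unfolding disjoint_family_on_def by auto
      from this[of f] this[of g] show ?case using union(3) by simp
    qed
  qed (use F f g g_F in auto)
qed

lemma space_gen_sigma[simp]: "space (gen_sigma M I X N) = space M"
  unfolding gen_sigma_def by (rule space_measure_of) auto

lemma sets_gen_sigma:
  "sets (gen_sigma M I X N) = sigma_sets (space M) {X i -` B \<inter> space M | i B. i \<in> I \<and> B \<in> sets N}"
  unfolding gen_sigma_def by (rule sets_measure_of) auto

lemma subalgebra_gen_sigma:
  assumes "\<And>i. i \<in> I \<Longrightarrow> X i \<in> measurable M N"
  shows "subalgebra M (gen_sigma M I X N)"
  unfolding subalgebra_def sets_gen_sigma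
  by (auto intro!: sets.sigma_sets_subset measurable_sets assms)

lemma measurable_gen_sigma:
  assumes "i \<in> I" "X i \<in> space M \<rightarrow> space N"
  shows "X i \<in> measurable (gen_sigma M I X N) N"
proof (rule measurableI)
  show "X i x \<in> space N" if "x \<in> space (gen_sigma M I X N)" for x
    using assms that by auto
  show "X i -` B \<inter> space (gen_sigma M I X N) \<in> sets (gen_sigma M I X N)" if "B \<in> sets N" for B
    unfolding sets_gen_sigma space_gen_sigma using assms that by (intro sigma_sets.Basic) blast
qed

lemma sets_gen_sigma_mono:
  "I \<subseteq> J \<Longrightarrow> sets (gen_sigma M I X N) \<subseteq> sets (gen_sigma M J X N)"
  unfolding sets_gen_sigma by (rule sigma_sets_mono) blast

section \<open>Counting paths and Poisson weights\<close>

lemma right_continuous_nat_eventually_const: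
  fixes f :: "real \<Rightarrow> nat"
  assumes "continuous (at_right t) (\<lambda>s. real (f s))"
  shows "\<forall>\<^sub>F s in at_right t. f s = f t"
proof -
  have "\<forall>\<^sub>F s in at_right t. dist (real (f s)) (real (f t)) < 1"
    using assms by (intro tendstoD) (simp_all add: continuous_within)
  then show ?thesis
    by eventually_elim (simp add: dist_real_def abs_less_iff; linarith)
qed

lemma measurable_counting_process_at_random_time:
  fixes N :: "real \<Rightarrow> 'a \<Rightarrow> nat"
  assumes mono: "\<And>\<omega> s t. \<omega> \<in> \<Omega> \<Longrightarrow> 0 \<le> s \<Longrightarrow> s \<le> t \<Longrightarrow> N s \<omega> \<le> N t \<omega>"
    and right_cont: "\<And>\<omega> t. \<omega> \<in> \<Omega> \<Longrightarrow> 0 \<le> t \<Longrightarrow> continuous (at_right t) (\<lambda>s. real (N s \<omega>))"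
    and x[measurable]: "x \<in> borel_measurable S" and x_nonneg: "\<And>z. z \<in> space S \<Longrightarrow> 0 \<le> x z"
    and w: "\<And>z. z \<in> space S \<Longrightarrow> w z \<in> \<Omega>"
    and N_w: "\<And>q. 0 < q \<Longrightarrow> (\<lambda>z. N q (w z)) \<in> measurable S (count_space UNIV)"
  shows "(\<lambda>z. N (x z) (w z)) \<in> measurable S (count_space UNIV)"
proof -
  have rational_witness: "N (x z) (w z) \<le> k \<longleftrightarrow> (\<exists>q::rat. x z < of_rat q \<and> N (of_rat q) (w z) \<le> k)"
    if z: "z \<in> space S" for z k
  proof
    assume "N (x z) (w z) \<le> k"
    moreover obtain b where "x z < b" and b: "\<And>s. x z < s \<Longrightarrow> s < b \<Longrightarrow> N s (w z) = N (x z) (w z)"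
      using right_continuous_nat_eventually_const[OF right_cont[OF w x_nonneg, OF z z]]
      unfolding eventually_at_right_field by blast
    moreover obtain q where "x z < of_rat q" "of_rat q < b"
      using of_rat_dense[OF \<open>x z < b\<close>] by blast
    ultimately show "\<exists>q::rat. x z < of_rat q \<and> N (of_rat q) (w z) \<le> k"
      by auto
  next
    assume "\<exists>q::rat. x z < of_rat q \<and> N (of_rat q) (w z) \<le> k"
    then show "N (x z) (w z) \<le> k"
      using mono[OF w x_nonneg, OF z z] by (auto intro: le_trans less_imp_le)
  qed
  have N_w_le: "{z\<in>space S. N (of_rat q) (w z) \<le> k} \<in> sets S" if "0 < q" for q k
    using measurable_sets[OF N_w[of "of_rat q"], of "{..k}"] that
    by (simp add: vimage_def Int_def conj_commute)
  have "{z\<in>space S. N (x z) (w z) \<le> k} =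
      (\<Union>q\<in>{q. 0 < q}. {z\<in>space S. x z < of_rat q} \<inter> {z\<in>space S. N (of_rat q) (w z) \<le> k})" for k
    using rational_witness x_nonneg by (fastforce dest: le_less_trans)
  then have "(\<lambda>z. N (x z) (w z)) \<in> borel_measurable S"
    by (intro borel_measurableI_le) (auto intro!: sets.countable_UN' N_w_le)
  then show ?thesis
    by (simp add: measurable_cong_sets[OF refl sets_borel_eq_count_space])
qed

lemma sets_partial_sums_eq:
  fixes m :: nat
  assumes "finite C" "\<And>c. c \<in> C \<Longrightarrow> J c \<le> m"
  shows "{v \<in> space (PiM {..<m} (\<lambda>_. borel)). \<forall>c\<in>C. (\<Sum>i<J c. v i) = r c}
    \<in> sets (PiM {..<m} (\<lambda>_. borel :: real measure))"
proof (intro sets.sets_Collect_finite_All assms(1))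
  fix c assume "c \<in> C"
  then have "(\<lambda>v. \<Sum>i<J c. v i) \<in> borel_measurable (PiM {..<m} (\<lambda>_. borel :: real measure))"
    using assms(2)[OF \<open>c \<in> C\<close>] by (intro borel_measurable_sum measurable_component_singleton) auto
  from measurable_sets[OF this, of "{r c}"]
  show "{v \<in> space (PiM {..<m} (\<lambda>_. borel)). (\<Sum>i<J c. v i) = r c} \<in> sets (PiM {..<m} (\<lambda>_. borel))"
    by (simp add: vimage_def Int_def conj_commute)
qed

lemma finite_times_partition:
  fixes X :: "real set"
  assumes "finite X" "X \<subseteq> {0..a}" "0 \<le> a" "a \<le> b"
  obtains ts :: "nat \<Rightarrow> real" and n :: nat and J :: "real \<Rightarrow> nat"
  where "0 < n" "ts 0 = 0" "ts (n - 1) = a" "ts n = b" "\<And>i. i < n \<Longrightarrow> ts i \<le> ts (Suc i)"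
    "\<And>x. x \<in> X \<Longrightarrow> J x < n \<and> ts (J x) = x"
proof -
  define xs where "xs = sorted_list_of_set (insert 0 (insert a X))"
  define n where "n = length xs"
  define ts where "ts i = (if i < n then xs ! i else b)" for i
  have set_xs: "set xs = insert 0 (insert a X)" and sorted: "sorted xs"
    using assms(1) unfolding xs_def by (simp_all del: sorted_list_of_set_insert_remove)
  have xs_range: "0 \<le> xs ! i \<and> xs ! i \<le> a" if "i < n" for i
    using nth_mem[of i xs] that set_xs assms(2,3) by (auto simp: n_def)
  have "\<exists>j<n. xs ! j = x" if "x \<in> insert 0 (insert a X)" for x
    using that set_xs by (auto simp: n_def in_set_conv_nth)
  then obtain J where J: "\<And>x. x \<in> insert 0 (insert a X) \<Longrightarrow> J x < n \<and> xs ! J x = x"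
    by metis
  have "0 < n" using J[of 0] by simp
  have mono: "xs ! i \<le> xs ! j" if "i \<le> j" "j < n" for i j
    using sorted_nth_mono[OF sorted that(1)] that(2) by (simp add: n_def)
  show thesis
  proof
    show "0 < n" by fact
    show "ts 0 = 0"
      using xs_range[OF \<open>0 < n\<close>] mono[of 0 "J 0"] J[of 0] by (simp add: ts_def \<open>0 < n\<close>)
    show "ts (n - 1) = a"
      using xs_range[of "n - 1"] mono[of "J a" "n - 1"] J[of a] \<open>0 < n\<close>
      by (simp add: ts_def) linarith
    show "ts n = b" by (simp add: ts_def)
    show "ts i \<le> ts (Suc i)" if "i < n" for i
      using mono[of i "Suc i"] xs_range[OF that] assms(4) that by (simp add: ts_def)
    show "J x < n \<and> ts (J x) = x" if "x \<in> X" for x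
      using J[of x] that by (simp add: ts_def)
  qed
qed

lemma poisson_weights_sums: "(\<lambda>k. x ^ k / fact k * exp (- x)) sums (1::real)"
proof -
  have "(\<lambda>k. x ^ k / fact k * exp (- x)) sums (exp x * exp (- x))"
    using exp_converges[of x] by (intro sums_mult2) (simp add: divide_inverse_commute)
  then show ?thesis by (simp add: exp_minus)
qed

lemma abs_poisson_mean_le:
  fixes f :: "nat \<Rightarrow> real"
  assumes "0 \<le> x" and f: "\<And>k. \<bar>f k\<bar> \<le> B"
  shows "\<bar>\<Sum>k. f k * (x ^ k / fact k * exp (- x))\<bar> \<le> B"
proof -
  define p where "p k = x ^ k / fact k * exp (- x)" for k
  have p: "p sums 1" "\<And>k. 0 \<le> p k"
    unfolding p_def using poisson_weights_sums[of x] \<open>0 \<le> x\<close> by simp_all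
  have bound: "\<bar>f k * p k\<bar> \<le> B * p k" for k
    using f[of k] p(2)[of k] by (simp add: abs_mult mult_right_mono)
  have summable: "summable (\<lambda>k. \<bar>f k * p k\<bar>)"
    using bound p(2) by (intro summable_comparison_test'[OF summable_mult[OF sums_summable[OF p(1)]]]) auto
  have "\<bar>\<Sum>k. f k * p k\<bar> \<le> (\<Sum>k. \<bar>f k * p k\<bar>)"
    by (rule summable_rabs[OF summable])
  also have "\<dots> \<le> (\<Sum>k. B * p k)"
    using bound summable sums_summable[OF p(1)] by (intro suminf_le summable_mult) auto
  also have "\<dots> = B"
    using sums_mult[OF p(1), of B] by (simp add: sums_iff)
  finally show ?thesis by (simp add: p_def)
qed

lemma poisson_cis_sums:
  "(\<lambda>k. cis (u * real k) * complex_of_real (x ^ k / fact k * exp (- x)))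
     sums exp (complex_of_real x * (exp (\<i> * complex_of_real u) - 1))"
proof -
  define z where "z = complex_of_real x * cis u"
  have "(\<lambda>k. z ^ k /\<^sub>R fact k * complex_of_real (exp (- x))) sums (exp z * complex_of_real (exp (- x)))"
    by (rule sums_mult2[OF exp_converges])
  moreover have "z ^ k /\<^sub>R fact k * complex_of_real (exp (- x))
      = cis (u * real k) * complex_of_real (x ^ k / fact k * exp (- x))" for k
  proof -
    have "z ^ k = complex_of_real (x ^ k) * cis (real k * u)"
      by (simp add: z_def power_mult_distrib Complex.DeMoivre)
    then show ?thesis
      by (simp add: scaleR_conv_of_real divide_inverse ac_simps)
  qed
  moreover have "exp z * complex_of_real (exp (- x)) = exp (complex_of_real x * (exp (\<i> * complex_of_real u) - 1))"
    by (simp add: z_def cis_conv_exp algebra_simps exp_diff exp_minus divide_inverse flip: exp_of_real)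
  ultimately show ?thesis by simp
qed

lemma poisson_cos_sums:
  "(\<lambda>k. cos (u * real k) * (x ^ k / fact k * exp (- x)))
     sums Re (exp (complex_of_real x * (exp (\<i> * complex_of_real u) - 1)))"
proof -
  have "Re (cis a * complex_of_real p) = cos a * p" for a p by simp
  then show ?thesis using sums_Re[OF poisson_cis_sums[of u x]] by (simp only:)
qed

lemma poisson_sin_sums:
  "(\<lambda>k. sin (u * real k) * (x ^ k / fact k * exp (- x)))
     sums Im (exp (complex_of_real x * (exp (\<i> * complex_of_real u) - 1)))"
proof -
  have "Im (cis a * complex_of_real p) = sin a * p" for a p by simp
  then show ?thesis using sums_Im[OF poisson_cis_sums[of u x]] by (simp only:)
qed

section \<open>Cumulative intensity and inverse subordinator\<close>

lemma cum_intensity_nonneg: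
  assumes "\<And>x. 0 \<le> x \<Longrightarrow> 0 \<le> lam x"
  shows "0 \<le> cum_intensity lam t"
  unfolding cum_intensity_def set_lebesgue_integral_def
  by (rule integral_nonneg_AE) (use assms in \<open>auto simp: indicator_def\<close>)

lemma cum_intensity_mono:
  assumes "\<And>x. 0 \<le> x \<Longrightarrow> 0 \<le> lam x" and "\<And>t. 0 \<le> t \<Longrightarrow> set_integrable lborel {0..t} lam"
    and "s \<le> t"
  shows "cum_intensity lam s \<le> cum_intensity lam t"
proof (cases "t < 0")
  case True
  then show ?thesis using \<open>s \<le> t\<close> by (simp add: cum_intensity_def)
next
  case False
  then have t: "set_integrable lborel {0..t} lam" using assms(2) by simp
  moreover have "set_integrable lborel {0..s} lam"
    by (rule set_integrable_subset[OF t]) (use \<open>s \<le> t\<close> in auto)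
  ultimately show ?thesis
    unfolding cum_intensity_def set_lebesgue_integral_def set_integrable_def
    using assms(1) \<open>s \<le> t\<close> by (intro integral_mono) (auto simp: indicator_def)
qed

lemma continuous_cum_intensity:
  assumes "\<And>t. 0 \<le> t \<Longrightarrow> set_integrable lborel {0..t} lam"
  shows "continuous_on UNIV (cum_intensity lam)"
  unfolding cum_intensity_def[abs_def] by (rule continuous_on_LBINT) (use assms in auto)

lemma inverse_subordinator_le:
  "0 \<le> u \<Longrightarrow> t < L u \<omega> \<Longrightarrow> inverse_subordinator L t \<omega> \<le> u"
  unfolding inverse_subordinator_def by (rule cInf_lower) (auto intro: bdd_belowI[of _ 0])

lemma inverse_subordinator_less_iff:
  assumes "\<exists>u\<ge>0. t < L u \<omega>"
  shows "inverse_subordinator L t \<omega> < x \<longleftrightarrow> (\<exists>u\<ge>0. u < x \<and> t < L u \<omega>)"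
  using assms unfolding inverse_subordinator_def
  by (subst cInf_less_iff) (auto intro: bdd_belowI[of _ 0])

lemma inverse_subordinator_mono:
  assumes "\<exists>u\<ge>0. t' < L u \<omega>" and "t \<le> t'"
  shows "inverse_subordinator L t \<omega> \<le> inverse_subordinator L t' \<omega>"
  unfolding inverse_subordinator_def
  using assms by (intro cInf_superset_mono) (auto intro: bdd_belowI[of _ 0])

lemma inverse_subordinator_right_cont:
  assumes unbounded: "\<forall>t. \<exists>u\<ge>0. t < L u \<omega>"
  shows "continuous (at_right t) (\<lambda>s. inverse_subordinator L s \<omega>)"
  unfolding continuous_within
proof (rule order_tendstoI)
  fix a assume a: "a < inverse_subordinator L t \<omega>"
  have above: "a < inverse_subordinator L s \<omega>" if "t < s" for s
  proof -
    have "inverse_subordinator L t \<omega> \<le> inverse_subordinator L s \<omega>"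
      using unbounded that by (intro inverse_subordinator_mono) auto
    with a show ?thesis by linarith
  qed
  show "\<forall>\<^sub>F s in at_right t. a < inverse_subordinator L s \<omega>"
    using eventually_at_right_less[of t] by eventually_elim (rule above)
next
  fix b assume "inverse_subordinator L t \<omega> < b"
  then obtain u where u: "0 \<le> u" "u < b" "t < L u \<omega>"
    using inverse_subordinator_less_iff[where L=L, OF spec[OF unbounded, of t]] by blast
  have below: "inverse_subordinator L s \<omega> < b" if "s < L u \<omega>" for s
    using inverse_subordinator_le[where L=L, OF u(1) that] u(2) by linarith
  show "\<forall>\<^sub>F s in at_right t. inverse_subordinator L s \<omega> < b"
    using order_tendstoD(2)[OF tendsto_ident_at u(3)] by eventually_elim (rule below)
qed

lemma inverse_subordinator_less_rat_iff:
  assumes mono: "\<And>s t. 0 \<le> s \<Longrightarrow> s \<le> t \<Longrightarrow> L s \<omega> \<le> L t \<omega>"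
  shows "inverse_subordinator L t \<omega> < x \<longleftrightarrow> (\<exists>q::rat. 0 \<le> q \<and> of_rat q < x \<and> t < L (of_rat q) \<omega>) \<or>
    ((\<forall>q::rat. 0 \<le> q \<longrightarrow> L (of_rat q) \<omega> \<le> t) \<and> Inf ({} :: real set) < x)"
proof -
  have rational: "(\<exists>u\<ge>0. u < x \<and> t < L u \<omega>) \<longleftrightarrow> (\<exists>q::rat. 0 \<le> q \<and> of_rat q < x \<and> t < L (of_rat q) \<omega>)" for x
  proof
    assume "\<exists>u\<ge>0. u < x \<and> t < L u \<omega>"
    then obtain u q where u: "0 \<le> u" "u < x" "t < L u \<omega>" and q: "u < of_rat q" "of_rat q < x"
      using of_rat_dense by blast
    have "0 < real_of_rat q" using u q by linarith
    then show "\<exists>q::rat. 0 \<le> q \<and> of_rat q < x \<and> t < L (of_rat q) \<omega>"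
      using mono[of u "of_rat q"] u q by (intro exI[of _ q]) auto
  next
    assume "\<exists>q::rat. 0 \<le> q \<and> of_rat q < x \<and> t < L (of_rat q) \<omega>"
    then show "\<exists>u\<ge>0. u < x \<and> t < L u \<omega>" by (metis zero_le_of_rat_iff)
  qed
  show ?thesis
  proof (cases "\<exists>u\<ge>0. t < L u \<omega>")
    case True
    then obtain u where u: "0 \<le> u" "t < L u \<omega>" by blast
    then have "\<exists>u'\<ge>0. u' < u + 1 \<and> t < L u' \<omega>" by (intro exI[of _ u]) simp
    then obtain q :: rat where "0 \<le> q" "t < L (of_rat q) \<omega>"
      using rational by blast
    then have "\<not> (\<forall>q::rat. 0 \<le> q \<longrightarrow> L (of_rat q) \<omega> \<le> t)"
      by (simp add: not_le exI[of _ q])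
    then show ?thesis
      using inverse_subordinator_less_iff[where L=L, OF True, of x] rational[of x] by blast
  next
    \<comment> \<open>a path that never exceeds \<open>t\<close> has the unspecified inverse \<open>Inf {}\<close>\<close>
    case False
    then have empty: "{u. 0 \<le> u \<and> t < L u \<omega>} = {}" by auto
    have "\<not> t < L (of_rat q) \<omega>" if "0 \<le> q" for q :: rat
      using False that by simp
    then show ?thesis
      unfolding inverse_subordinator_def empty by (meson not_less)
  qed
qed

lemma measurable_inverse_subordinator:
  assumes L[measurable]: "\<And>t. L t \<in> borel_measurable M"
    and mono: "\<And>\<omega> s t. \<omega> \<in> space M \<Longrightarrow> 0 \<le> s \<Longrightarrow> s \<le> t \<Longrightarrow> L s \<omega> \<le> L t \<omega>"
  shows "inverse_subordinator L t \<in> borel_measurable M"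
proof (rule borel_measurableI_less)
  fix x
  have "inverse_subordinator L t \<omega> < x \<longleftrightarrow> (\<exists>q::rat. 0 \<le> q \<and> of_rat q < x \<and> t < L (of_rat q) \<omega>) \<or>
      ((\<forall>q::rat. 0 \<le> q \<longrightarrow> L (of_rat q) \<omega> \<le> t) \<and> Inf ({} :: real set) < x)" if "\<omega> \<in> space M" for \<omega>
    using mono[OF that] by (rule inverse_subordinator_less_rat_iff)
  then have "{\<omega>\<in>space M. inverse_subordinator L t \<omega> < x} =
      {\<omega>\<in>space M. (\<exists>q::rat. 0 \<le> q \<and> of_rat q < x \<and> t < L (of_rat q) \<omega>) \<or>
        ((\<forall>q::rat. 0 \<le> q \<longrightarrow> L (of_rat q) \<omega> \<le> t) \<and> Inf ({} :: real set) < x)}"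
    by auto
  also have "\<dots> \<in> sets M" by measurable
  finally show "{\<omega>\<in>space M. inverse_subordinator L t \<omega> < x} \<in> sets M" .
qed

lemma exp_minus_nat_tendsto_zero: "(\<lambda>n. exp (c - real n)) \<longlonglongrightarrow> 0"
proof -
  have "(\<lambda>n. exp (c - real n)) = (\<lambda>n. exp c * exp (- 1) ^ n)"
    by (simp add: fun_eq_iff exp_diff exp_minus field_simps flip: exp_of_nat_mult)
  moreover have "(\<lambda>n. exp c * exp (- 1) ^ n) \<longlonglongrightarrow> exp c * 0"
    by (intro tendsto_mult tendsto_const LIMSEQ_realpow_zero) auto
  ultimately show ?thesis by simp
qed

lemma stable_subordinator_tail:
  assumes "prob_space M" and L: "stable_subordinator \<alpha> M L" and "0 \<le> t"
  shows "measure M {\<omega>\<in>space M. L t \<omega> \<le> c} \<le> exp (c - t)"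
proof -
  interpret prob_space M by fact
  have L_measurable[measurable]: "L t \<in> borel_measurable M"
    and L_zero: "\<omega> \<in> space M \<Longrightarrow> L 0 \<omega> = 0"
    and L_mono: "\<omega> \<in> space M \<Longrightarrow> 0 \<le> r \<Longrightarrow> r \<le> t \<Longrightarrow> L r \<omega> \<le> L t \<omega>"
    and laplace: "0 \<le> t \<Longrightarrow> 0 \<le> u \<Longrightarrow> expectation (\<lambda>\<omega>. exp (- u * L t \<omega>)) = exp (- t * u powr \<alpha>)"
    for r u \<omega> using L unfolding stable_subordinator_def levy_process_def by auto
  have L_nonneg: "0 \<le> L t \<omega>" if "\<omega> \<in> space M" for \<omega>
    using L_zero[OF that] L_mono[OF that order_refl \<open>0 \<le> t\<close>] by simp
  have "integrable M (\<lambda>\<omega>. exp (- 1 * L t \<omega>))"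
    by (rule integrable_const_bound[where B=1]) (auto intro!: AE_I2 simp: L_nonneg)
  then have "prob {\<omega>\<in>space M. exp (- c) \<le> exp (- 1 * L t \<omega>)}
      \<le> expectation (\<lambda>\<omega>. exp (- 1 * L t \<omega>)) / exp (- c)"
    by (intro integral_Markov_inequality_measure) auto
  also have "\<dots> = exp (c - t)"
    using laplace[OF \<open>0 \<le> t\<close>, of 1] by (simp flip: exp_diff)
  finally show ?thesis by simp
qed

lemma stable_subordinator_unbounded:
  assumes "prob_space M" and L: "stable_subordinator \<alpha> M L"
  shows "AE \<omega> in M. \<forall>t. \<exists>u\<ge>0. t < L u \<omega>"
proof -
  interpret prob_space M by fact
  have L_measurable[measurable]: "L t \<in> borel_measurable M" for t
    using L unfolding stable_subordinator_def levy_process_def by auto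
  note tail = stable_subordinator_tail[OF assms]
  have "AE \<omega> in M. \<exists>n::nat. real m < L (real n) \<omega>" for m :: nat
  proof (rule AE_I')
    let ?B = "{\<omega>\<in>space M. \<forall>n::nat. L (real n) \<omega> \<le> real m}"
    have "prob ?B \<le> 0"
    proof (rule tendsto_lowerbound[OF exp_minus_nat_tendsto_zero])
      show "\<forall>\<^sub>F n in sequentially. prob ?B \<le> exp (real m - real n)"
      proof (intro always_eventually allI)
        fix n :: nat
        have "prob ?B \<le> prob {\<omega>\<in>space M. L (real n) \<omega> \<le> real m}"
          by (rule finite_measure_mono) auto
        also have "\<dots> \<le> exp (real m - real n)"
          by (rule tail) simp
        finally show "prob ?B \<le> exp (real m - real n)" .
      qed
    qed simp
    then show "?B \<in> null_sets M"
      by (simp add: null_sets_def emeasure_eq_measure measure_le_0_iff)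
  qed (auto simp: not_less)
  then have "AE \<omega> in M. \<forall>m::nat. \<exists>n::nat. real m < L (real n) \<omega>"
    by (simp add: AE_all_countable)
  then show ?thesis
  proof eventually_elim
    case (elim \<omega>)
    show ?case
    proof
      fix t :: real
      obtain m :: nat where "t < real m" using reals_Archimedean2 by blast
      with elim obtain n :: nat where "t < L (real n) \<omega>" by (meson less_trans)
      then show "\<exists>u\<ge>0. t < L u \<omega>" by (intro exI[of _ "real n"]) simp
    qed
  qed
qed

locale unit_poisson_process = prob_space M for M :: "'a measure" +
  fixes N :: "real \<Rightarrow> 'a \<Rightarrow> nat"
  assumes std_poisson: "std_poisson_process M N"
begin

lemma N_measurable[measurable]: "N t \<in> measurable M (count_space UNIV)"
  and N_zero: "\<omega> \<in> space M \<Longrightarrow> N 0 \<omega> = 0"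
  and N_mono: "\<omega> \<in> space M \<Longrightarrow> 0 \<le> s \<Longrightarrow> s \<le> t \<Longrightarrow> N s \<omega> \<le> N t \<omega>"
  and N_right_cont: "\<omega> \<in> space M \<Longrightarrow> 0 \<le> t \<Longrightarrow> continuous (at_right t) (\<lambda>s. real (N s \<omega>))"
  and N_indep_increments: "indep_increments M (\<lambda>t \<omega>. real (N t \<omega>))"
  and N_increment_dist: "0 \<le> s \<Longrightarrow> s \<le> t \<Longrightarrow>
    prob {\<omega>\<in>space M. N t \<omega> - N s \<omega> = k} = (t - s) ^ k / fact k * exp (- (t - s))"
  using std_poisson unfolding std_poisson_process_def by auto

lemma increment_indep_of_past:
  fixes h :: "int \<Rightarrow> real"
  assumes C: "finite C" "\<And>c. c \<in> C \<Longrightarrow> 0 \<le> fst c \<and> fst c \<le> a" and ab: "0 \<le> a" "a \<le> b"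
    and h: "\<And>z. \<bar>h z\<bar> \<le> B"
  defines "Past \<equiv> {\<omega>\<in>space M. \<forall>c\<in>C. N (fst c) \<omega> = snd c}"
  shows "(\<integral>\<omega>. indicator Past \<omega> * h (int (N b \<omega>) - int (N a \<omega>)) \<partial>M)
       = prob Past * expectation (\<lambda>\<omega>. h (int (N b \<omega>) - int (N a \<omega>)))"
proof -
  \<comment> \<open>\<open>Past\<close> is a function of the increments over a partition of \<open>[0, a]\<close> through the times
    in \<open>C\<close>, while \<open>N b - N a\<close> is the next increment.\<close>
  obtain ts n J where n: "0 < n" and ts: "ts 0 = 0" "ts (n - 1) = a" "ts n = b"
    and ts_mono: "\<And>i. i < n \<Longrightarrow> ts i \<le> ts (Suc i)"
    and J: "\<And>x. x \<in> fst ` C \<Longrightarrow> J x < n \<and> ts (J x) = x"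
    by (rule finite_times_partition[of "fst ` C" a b]) (use C ab in auto)
  define D where "D i \<omega> = real (N (ts (Suc i)) \<omega>) - real (N (ts i) \<omega>)" for i \<omega>
  have D_measurable[measurable]: "D i \<in> borel_measurable M" for i
    unfolding D_def by measurable
  have "indep_vars (\<lambda>_. borel) D {..<n}"
    using N_indep_increments ts ts_mono unfolding indep_increments_def D_def by auto
  then have indep_last: "indep_var (PiM {..<n - 1} (\<lambda>_. borel)) (\<lambda>\<omega>. restrict (\<lambda>i. D i \<omega>) {..<n - 1})
      (PiM {n - 1} (\<lambda>_. borel)) (\<lambda>\<omega>. restrict (\<lambda>i. D i \<omega>) {n - 1})"
    by (rule indep_var_restrict) (use n in auto)
  have telescope: "real (N (ts j) \<omega>) = (\<Sum>i<j. D i \<omega>)" if "\<omega> \<in> space M" for j \<omega>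
    unfolding D_def by (subst sum_lessThan_telescope) (simp add: ts N_zero[OF that])
  have J_le: "J (fst c) \<le> n - 1" if "c \<in> C" for c
    using J[of "fst c"] that by fastforce
  define Q where "Q = {v \<in> space (PiM {..<n - 1} (\<lambda>_. borel)). \<forall>c\<in>C. (\<Sum>i<J (fst c). v i) = real (snd c)}"
  have Q: "Q \<in> sets (PiM {..<n - 1} (\<lambda>_. borel :: real measure))"
    unfolding Q_def using C(1) J_le by (rule sets_partial_sums_eq)
  define \<phi> where "\<phi> v = (indicator Q v :: real)" for v
  define \<psi> where "\<psi> w = h \<lfloor>w (n - 1)\<rfloor>" for w :: "nat \<Rightarrow> real"
  have "\<phi> \<in> borel_measurable (PiM {..<n - 1} (\<lambda>_. borel))"
    unfolding \<phi>_def using Q by measurable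
  moreover have "\<psi> \<in> borel_measurable (PiM {n - 1} (\<lambda>_. borel))"
    unfolding \<psi>_def
    by (rule measurable_compose[OF measurable_compose[OF _ measurable_real_floor] borel_measurable_count_space])
       (rule measurable_component_singleton, simp)
  ultimately have indep: "indep_var borel (\<lambda>\<omega>. \<phi> (restrict (\<lambda>i. D i \<omega>) {..<n - 1}))
      borel (\<lambda>\<omega>. \<psi> (restrict (\<lambda>i. D i \<omega>) {n - 1}))"
    using indep_var_compose[OF indep_last] by (simp add: comp_def)
  have \<phi>_eq: "\<phi> (restrict (\<lambda>i. D i \<omega>) {..<n - 1}) = indicator Past \<omega>" if \<omega>: "\<omega> \<in> space M" for \<omega>
  proof -
    have "(\<Sum>i<J (fst c). restrict (\<lambda>i. D i \<omega>) {..<n - 1} i) = real (N (fst c) \<omega>)" if "c \<in> C" for c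
      using J_le[OF that] J[OF imageI[OF that]] telescope[OF \<omega>, of "J (fst c)"] by simp
    then show ?thesis
      using \<omega> unfolding \<phi>_def Q_def Past_def indicator_def by (auto simp: space_PiM)
  qed
  have \<psi>_eq: "\<psi> (restrict (\<lambda>i. D i \<omega>) {n - 1}) = h (int (N b \<omega>) - int (N a \<omega>))" for \<omega>
  proof -
    have "D (n - 1) \<omega> = of_int (int (N b \<omega>) - int (N a \<omega>))"
      unfolding D_def using ts n by simp
    then show ?thesis
      unfolding \<psi>_def by (simp only: restrict_apply' singletonI floor_of_int)
  qed
  have "Past \<in> events"
    unfolding Past_def by (intro sets.sets_Collect_finite_All C(1)) measurable
  moreover have "(\<integral>\<omega>. indicator Past \<omega> * h (int (N b \<omega>) - int (N a \<omega>)) \<partial>M)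
      = (\<integral>\<omega>. indicator Past \<omega> \<partial>M) * expectation (\<lambda>\<omega>. h (int (N b \<omega>) - int (N a \<omega>)))"
  proof (rule integral_mult_indep_cong[OF indep \<phi>_eq])
    show "\<psi> (restrict (\<lambda>i. D i \<omega>) {n - 1}) = h (int (N b \<omega>) - int (N a \<omega>))" for \<omega>
      by (rule \<psi>_eq)
    show "\<bar>\<phi> (restrict (\<lambda>i. D i \<omega>) {..<n - 1})\<bar> \<le> 1" for \<omega>
      by (simp add: \<phi>_def)
    show "\<bar>\<psi> (restrict (\<lambda>i. D i \<omega>) {n - 1})\<bar> \<le> B" for \<omega>
      by (simp add: \<psi>_def h)
  qed
  ultimately show ?thesis by simp
qed

lemma expectation_increment:
  fixes h :: "int \<Rightarrow> real"
  assumes ab: "0 \<le> a" "a \<le> b" and h: "\<And>z. \<bar>h z\<bar> \<le> B"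
  shows "expectation (\<lambda>\<omega>. h (int (N b \<omega>) - int (N a \<omega>)))
       = (\<Sum>k. h (int k) * ((b - a) ^ k / fact k * exp (- (b - a))))"
proof -
  define p where "p k = (b - a) ^ k / fact k * exp (- (b - a))" for k
  define E where "E k = {\<omega>\<in>space M. N b \<omega> - N a \<omega> = k}" for k
  have E[measurable]: "E k \<in> events" for k
    unfolding E_def by measurable
  have prob_E: "prob (E k) = p k" for k
    unfolding E_def p_def using N_increment_dist[OF ab] by simp
  have p_nonneg: "0 \<le> p k" for k
    unfolding p_def using ab by simp
  have single: "(\<lambda>k. f (h (int k) * indicator (E k) \<omega>)) = (\<lambda>k. if k = N b \<omega> - N a \<omega> then f (h (int k)) else 0)"
    if "\<omega> \<in> space M" "f 0 = 0" for \<omega> and f :: "real \<Rightarrow> real"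
    using that by (auto simp: E_def indicator_def fun_eq_iff)
  have pointwise: "h (int (N b \<omega>) - int (N a \<omega>)) = (\<Sum>k. h (int k) * indicator (E k) \<omega>)"
    if "\<omega> \<in> space M" for \<omega>
    using N_mono[OF that ab] sums_unique[OF sums_single[of "N b \<omega> - N a \<omega>" "\<lambda>k. h (int k)"]]
    by (simp add: single[OF that, of "\<lambda>x. x"] of_nat_diff)
  have "expectation (\<lambda>\<omega>. h (int (N b \<omega>) - int (N a \<omega>)))
      = expectation (\<lambda>\<omega>. \<Sum>k. h (int k) * indicator (E k) \<omega>)"
    by (rule Bochner_Integration.integral_cong) (simp_all add: pointwise)
  also have "\<dots> = (\<Sum>k. expectation (\<lambda>\<omega>. h (int k) * indicator (E k) \<omega>))"
  proof (rule integral_suminf)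
    show "integrable M (\<lambda>\<omega>. h (int k) * indicator (E k) \<omega>)" for k
      by (rule integrable_const_bound[where B="\<bar>h (int k)\<bar>"]) (auto simp: indicator_def)
    show "AE \<omega> in M. summable (\<lambda>k. norm (h (int k) * indicator (E k) \<omega>))"
      using single[of _ norm] by (intro AE_I2) (simp add: summable_single)
    have p_sums: "p sums 1"
      unfolding p_def by (rule poisson_weights_sums)
    have "summable (\<lambda>k. \<bar>h (int k)\<bar> * p k)"
    proof (rule summable_comparison_test'[OF summable_mult[OF sums_summable[OF p_sums]]])
      show "norm (\<bar>h (int k)\<bar> * p k) \<le> B * p k" for k
        using h[of "int k"] p_nonneg[of k] by (simp add: abs_mult mult_right_mono)
    qed
    moreover have "(\<integral>\<omega>. norm (h (int k) * indicator (E k) \<omega>) \<partial>M) = \<bar>h (int k)\<bar> * p k" for k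
      by (simp add: abs_mult prob_E)
    ultimately show "summable (\<lambda>k. \<integral>\<omega>. norm (h (int k) * indicator (E k) \<omega>) \<partial>M)"
      by simp
  qed
  also have "\<dots> = (\<Sum>k. h (int k) * p k)"
    by (simp add: prob_E)
  finally show ?thesis unfolding p_def .
qed

end

section \<open>Time change by an independent process\<close>

locale poisson_time_change = unit_poisson_process +
  fixes G :: "'a measure" and A :: "real \<Rightarrow> 'a \<Rightarrow> real"
  assumes subalgebra_G: "subalgebra M G"
    and indep_G_N: "indep_set (sets G) (sets (gen_sigma M {0..} N (count_space UNIV)))"
    and A_measurable: "\<And>t. 0 \<le> t \<Longrightarrow> A t \<in> borel_measurable G"
    and A_nonneg: "\<And>t \<omega>. 0 \<le> A t \<omega>"
    and A_mono_AE: "AE \<omega> in M. \<forall>s t. 0 \<le> s \<longrightarrow> s \<le> t \<longrightarrow> A s \<omega> \<le> A t \<omega>"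
begin

abbreviation "N\<^sub>A t \<omega> \<equiv> N (A t \<omega>) \<omega>"

abbreviation "sigma_N \<equiv> gen_sigma M {0..} N (count_space UNIV)"

definition cox_filtration :: "real \<Rightarrow> 'a measure" where
  "cox_filtration s = sigma (space M) (sets G \<union> sets (gen_sigma M {0..s} N\<^sub>A (count_space UNIV)))"

lemma space_G: "space G = space M" and sets_G: "sets G \<subseteq> sets M"
  using subalgebra_G by (auto simp: subalgebra_def)

lemma A_measurable_M[measurable]: "0 \<le> t \<Longrightarrow> A t \<in> borel_measurable M"
  using A_measurable measurable_from_subalg[OF subalgebra_G] by blast

lemma N_at_random_time:
  assumes "x \<in> borel_measurable S" "\<And>z. z \<in> space S \<Longrightarrow> 0 \<le> x z"
    and "\<And>z. z \<in> space S \<Longrightarrow> w z \<in> space M"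
    and "\<And>q. 0 < q \<Longrightarrow> (\<lambda>z. N q (w z)) \<in> measurable S (count_space UNIV)"
  shows "(\<lambda>z. N (x z) (w z)) \<in> measurable S (count_space UNIV)"
  using N_mono N_right_cont assms by (rule measurable_counting_process_at_random_time)

lemma N_A_measurable[measurable]: "0 \<le> t \<Longrightarrow> N\<^sub>A t \<in> measurable M (count_space UNIV)"
  by (rule N_at_random_time[where w="\<lambda>\<omega>. \<omega>"]) (simp_all add: A_nonneg)

lemma subalgebra_sigma_N: "subalgebra M sigma_N"
  by (rule subalgebra_gen_sigma) simp

lemma sets_cox_filtration: "sets (cox_filtration s) = sigma_sets (space M) (sets G \<union> sets (gen_sigma M {0..s} N\<^sub>A (count_space UNIV)))"
  and space_cox_filtration[simp]: "space (cox_filtration s) = space M"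
  using sets_G sets.sets_into_space subalgebra_gen_sigma[of "{0..s}" N\<^sub>A M "count_space UNIV"]
  unfolding cox_filtration_def subalgebra_def
  by (auto intro!: sets_measure_of space_measure_of)

lemma subalgebra_cox_filtration: "subalgebra M (cox_filtration s)"
  unfolding subalgebra_def sets_cox_filtration
  using sets_G subalgebra_gen_sigma[of "{0..s}" N\<^sub>A M "count_space UNIV"]
  by (auto intro!: sets.sigma_sets_subset simp: subalgebra_def)

lemma cox_filtration_mono: "s \<le> t \<Longrightarrow> sets (cox_filtration s) \<subseteq> sets (cox_filtration t)"
  unfolding sets_cox_filtration
  using sets_gen_sigma_mono[of "{0..s}" "{0..t}" M N\<^sub>A "count_space UNIV"]
  by (intro sigma_sets_mono') auto

lemma A_adapted:
  assumes "0 \<le> t"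
  shows "A t \<in> borel_measurable (cox_filtration s)"
proof (rule measurable_from_subalg[OF _ A_measurable[OF assms]])
  show "subalgebra (cox_filtration s) G"
    by (auto simp: subalgebra_def space_G sets_cox_filtration)
qed

lemma N_A_adapted:
  assumes "0 \<le> t" "t \<le> s"
  shows "N\<^sub>A t \<in> measurable (cox_filtration s) (count_space UNIV)"
proof (rule measurable_from_subalg[OF _ measurable_gen_sigma[of t "{0..s}"]])
  show "subalgebra (cox_filtration s) (gen_sigma M {0..s} N\<^sub>A (count_space UNIV))"
    by (auto simp: subalgebra_def sets_cox_filtration)
qed (use assms in auto)

definition cylinder_events :: "real \<Rightarrow> 'a set set" where
  "cylinder_events s = {E \<inter> {\<omega>\<in>space M. \<forall>c\<in>C. N\<^sub>A (fst c) \<omega> = snd c} | E C.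
     E \<in> sets G \<and> finite C \<and> fst ` C \<subseteq> {0..s}}"

lemma cylinder_events_sets: "cylinder_events s \<subseteq> events"
proof
  fix D assume "D \<in> cylinder_events s"
  then obtain E C where "D = E \<inter> {\<omega>\<in>space M. \<forall>c\<in>C. N\<^sub>A (fst c) \<omega> = snd c}"
    and "E \<in> sets G" "finite C" "fst ` C \<subseteq> {0..s}"
    unfolding cylinder_events_def by blast
  moreover have "{\<omega>\<in>space M. N\<^sub>A (fst c) \<omega> = snd c} \<in> events" if "c \<in> C" for c
  proof -
    have "0 \<le> fst c" using \<open>fst ` C \<subseteq> {0..s}\<close> that by auto
    from measurable_sets[OF N_A_measurable[OF this], of "{snd c}"] show ?thesis
      by (simp add: vimage_def Int_def conj_commute)
  qed
  ultimately show "D \<in> events"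
    using sets_G by (auto intro!: sets.sets_Collect_finite_All)
qed

lemma space_cylinder_events: "space M \<in> cylinder_events s"
  unfolding cylinder_events_def
  by (intro CollectI exI[of _ "space M"] exI[of _ "{}"]) (auto simp flip: space_G)

lemma Int_stable_cylinder_events: "Int_stable (cylinder_events s)"
proof (rule Int_stableI)
  fix D1 D2 assume "D1 \<in> cylinder_events s" "D2 \<in> cylinder_events s"
  then obtain E1 C1 E2 C2 where "D1 = E1 \<inter> {\<omega>\<in>space M. \<forall>c\<in>C1. N\<^sub>A (fst c) \<omega> = snd c}"
    "D2 = E2 \<inter> {\<omega>\<in>space M. \<forall>c\<in>C2. N\<^sub>A (fst c) \<omega> = snd c}"
    "E1 \<in> sets G" "finite C1" "fst ` C1 \<subseteq> {0..s}" "E2 \<in> sets G" "finite C2" "fst ` C2 \<subseteq> {0..s}"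
    unfolding cylinder_events_def by blast
  then show "D1 \<inter> D2 \<in> cylinder_events s"
    unfolding cylinder_events_def
    by (intro CollectI exI[of _ "E1 \<inter> E2"] exI[of _ "C1 \<union> C2"]) auto
qed

lemma cox_filtration_generated_by_cylinder_events:
  "sets (cox_filtration s) \<subseteq> sigma_sets (space M) (cylinder_events s)"
proof -
  have G: "E \<in> cylinder_events s" if "E \<in> sets G" for E
  proof -
    have "E = E \<inter> {\<omega>\<in>space M. \<forall>c\<in>{}. N\<^sub>A (fst c) \<omega> = snd c}"
      using sets.sets_into_space[OF that] space_G by blast
    with that show ?thesis
      unfolding cylinder_events_def by blast
  qed
  have N\<^sub>A: "N\<^sub>A r -` B \<inter> space M \<in> sigma_sets (space M) (cylinder_events s)"
    if "r \<in> {0..s}" for r B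
  proof -
    have "{\<omega>\<in>space M. N\<^sub>A r \<omega> = k} \<in> cylinder_events s" for k
      unfolding cylinder_events_def mem_Collect_eq
      by (intro exI[of _ "space M"] exI[of _ "{(r, k)}"]) (use that sets.top[of G] space_G in auto)
    then have "(\<Union>k\<in>B. {\<omega>\<in>space M. N\<^sub>A r \<omega> = k}) \<in> sigma_sets (space M) (cylinder_events s)"
      by (intro sigma_sets_UNION) auto
    moreover have "N\<^sub>A r -` B \<inter> space M = (\<Union>k\<in>B. {\<omega>\<in>space M. N\<^sub>A r \<omega> = k})"
      by blast
    ultimately show ?thesis by simp
  qed
  have "sets (gen_sigma M {0..s} N\<^sub>A (count_space UNIV)) \<subseteq> sigma_sets (space M) (cylinder_events s)"
    unfolding sets_gen_sigma by (rule sigma_sets_mono) (use N\<^sub>A in blast)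
  then show ?thesis
    unfolding sets_cox_filtration by (intro sigma_sets_mono Un_least) (use G in auto)
qed

lemma N_A_measurable_pair:
  assumes "0 \<le> r"
  shows "(\<lambda>p. N (A r (fst p)) (snd p)) \<in> measurable (G \<Otimes>\<^sub>M sigma_N) (count_space UNIV)"
proof (rule N_at_random_time)
  show "(\<lambda>p. A r (fst p)) \<in> borel_measurable (G \<Otimes>\<^sub>M sigma_N)"
    using A_measurable[OF assms] by measurable
  show "(\<lambda>p. N q (snd p)) \<in> measurable (G \<Otimes>\<^sub>M sigma_N) (count_space UNIV)" if "0 < q" for q
    using that by (intro measurable_compose[OF measurable_snd measurable_gen_sigma]) auto
qed (auto simp: A_nonneg space_pair_measure)

lemma integral_frozen_clock:
  fixes h :: "int \<Rightarrow> real"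
  assumes h: "\<And>z. \<bar>h z\<bar> \<le> B" and st: "0 \<le> s" "s \<le> t" and C: "finite C" "fst ` C \<subseteq> {0..s}"
    and mono: "\<forall>s t. 0 \<le> s \<longrightarrow> s \<le> t \<longrightarrow> A s y \<le> A t y"
  defines "Past \<equiv> {\<omega>\<in>space M. \<forall>c\<in>C. N (A (fst c) y) \<omega> = snd c}"
  shows "(\<integral>\<omega>. indicator Past \<omega> * h (int (N (A t y) \<omega>) - int (N (A s y) \<omega>)) \<partial>M)
      = prob Past * (\<Sum>k. h (int k) * ((A t y - A s y) ^ k / fact k * exp (- (A t y - A s y))))"
proof -
  define C' where "C' = (\<lambda>c. (A (fst c) y, snd c)) ` C"
  have ab: "0 \<le> A s y" "A s y \<le> A t y"
    using mono st A_nonneg by auto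
  have C': "finite C'" "\<And>c. c \<in> C' \<Longrightarrow> 0 \<le> fst c \<and> fst c \<le> A s y"
    using C mono A_nonneg by (auto simp: C'_def)
  have "Past = {\<omega>\<in>space M. \<forall>c\<in>C'. N (fst c) \<omega> = snd c}"
    by (auto simp: Past_def C'_def)
  then show ?thesis
    using increment_indep_of_past[where h=h, OF C' ab h] expectation_increment[where h=h, OF ab h] by simp
qed

lemma set_integral_increment_cylinder:
  fixes h :: "int \<Rightarrow> real"
  assumes h: "\<And>z. \<bar>h z\<bar> \<le> B" and st: "0 \<le> s" "s \<le> t" and D: "D \<in> cylinder_events s"
  defines "P x \<equiv> \<Sum>k. h (int k) * (x ^ k / fact k * exp (- x))"
  shows "(\<integral>\<omega>\<in>D. h (int (N\<^sub>A t \<omega>) - int (N\<^sub>A s \<omega>)) \<partial>M) = (\<integral>\<omega>\<in>D. P (max 0 (A t \<omega> - A s \<omega>)) \<partial>M)"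
proof -
  obtain E C where D_eq: "D = E \<inter> {\<omega>\<in>space M. \<forall>c\<in>C. N\<^sub>A (fst c) \<omega> = snd c}"
    and E: "E \<in> sets G" and C: "finite C" "fst ` C \<subseteq> {0..s}"
    using D unfolding cylinder_events_def by blast
  define Ev where "Ev y \<omega> \<longleftrightarrow> y \<in> E \<and> (\<forall>c\<in>C. N (A (fst c) y) \<omega> = snd c)" for y \<omega>
  define F1 where "F1 y \<omega> = (if Ev y \<omega> then h (int (N (A t y) \<omega>) - int (N (A s y) \<omega>)) else 0)" for y \<omega>
  \<comment> \<open>\<open>max 0\<close> keeps the integrand bounded off the null set where \<open>A\<close> is not monotone.\<close>
  define F2 where "F2 y \<omega> = (if Ev y \<omega> then P (max 0 (A t y - A s y)) else 0)" for y \<omega>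
  have B: "0 \<le> B" using h[of 0] by linarith
  have P_bound: "\<bar>P (max 0 x)\<bar> \<le> B" for x
    unfolding P_def by (rule abs_poisson_mean_le) (simp_all add: h)
  have [measurable]: "(\<lambda>p. N (A r (fst p)) (snd p)) \<in> measurable (G \<Otimes>\<^sub>M sigma_N) (count_space UNIV)"
    if "r \<in> {s, t} \<union> fst ` C" for r
    using that C st by (intro N_A_measurable_pair) auto
  have [measurable]: "(\<lambda>p. A r (fst p)) \<in> borel_measurable (G \<Otimes>\<^sub>M sigma_N)" if "r \<in> {s, t}" for r
  proof -
    have "0 \<le> r" using that st by auto
    from A_measurable[OF this] show ?thesis by measurable
  qed
  have Ev_measurable: "{p \<in> space (G \<Otimes>\<^sub>M sigma_N). Ev (fst p) (snd p)} \<in> sets (G \<Otimes>\<^sub>M sigma_N)"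
    unfolding Ev_def using E C by measurable
  have F1_measurable: "case_prod F1 \<in> borel_measurable (G \<Otimes>\<^sub>M sigma_N)"
    unfolding F1_def split_beta' using Ev_measurable by measurable
  have F2_measurable: "case_prod F2 \<in> borel_measurable (G \<Otimes>\<^sub>M sigma_N)"
    unfolding F2_def split_beta' P_def using Ev_measurable by measurable
  have F1_bound: "\<bar>F1 y \<omega>\<bar> \<le> B" and F2_bound: "\<bar>F2 y \<omega>\<bar> \<le> B" for y \<omega>
    using h P_bound B by (simp_all add: F1_def F2_def)
  note iterated1 = integral_indep_subalgebras[OF subalgebra_G subalgebra_sigma_N indep_G_N F1_measurable F1_bound]
  note iterated2 = integral_indep_subalgebras[OF subalgebra_G subalgebra_sigma_N indep_G_N F2_measurable F2_bound]
  have D_iff: "\<omega> \<in> D \<longleftrightarrow> Ev \<omega> \<omega>" if "\<omega> \<in> space M" for \<omega>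
    using that sets.sets_into_space[OF E] by (auto simp: D_eq Ev_def space_G)
  have "(\<integral>\<omega>\<in>D. h (int (N\<^sub>A t \<omega>) - int (N\<^sub>A s \<omega>)) \<partial>M) = (\<integral>\<omega>. F1 \<omega> \<omega> \<partial>M)"
    unfolding set_lebesgue_integral_def
    by (rule Bochner_Integration.integral_cong) (simp_all add: F1_def D_iff)
  also have "\<dots> = (\<integral>y. (\<integral>\<omega>. F1 y \<omega> \<partial>M) \<partial>M)"
    by (rule iterated1(1))
  also have "\<dots> = (\<integral>y. (\<integral>\<omega>. F2 y \<omega> \<partial>M) \<partial>M)"
  proof (rule integral_cong_AE)
    show "(\<lambda>y. \<integral>\<omega>. F1 y \<omega> \<partial>M) \<in> borel_measurable M" "(\<lambda>y. \<integral>\<omega>. F2 y \<omega> \<partial>M) \<in> borel_measurable M"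
      using iterated1(2) iterated2(2) measurable_from_subalg[OF subalgebra_G] by blast+
    show "AE y in M. (\<integral>\<omega>. F1 y \<omega> \<partial>M) = (\<integral>\<omega>. F2 y \<omega> \<partial>M)"
      using A_mono_AE
    proof eventually_elim
      case (elim y)
      show ?case
      proof (cases "y \<in> E")
        case False
        then show ?thesis by (simp add: F1_def F2_def Ev_def)
      next
        case True
        define Past where "Past = {\<omega>\<in>space M. \<forall>c\<in>C. N (A (fst c) y) \<omega> = snd c}"
        have "A s y \<le> A t y" using elim st by auto
        have Past: "Past \<in> events"
          unfolding Past_def using C(1) by (intro sets.sets_Collect_finite_All) measurable
        have Ev_Past: "Ev y \<omega> \<longleftrightarrow> \<omega> \<in> Past" if "\<omega> \<in> space M" for \<omega>
          using that True by (auto simp: Ev_def Past_def)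
        have "(\<integral>\<omega>. F1 y \<omega> \<partial>M) = (\<integral>\<omega>. indicator Past \<omega> * h (int (N (A t y) \<omega>) - int (N (A s y) \<omega>)) \<partial>M)"
          by (rule Bochner_Integration.integral_cong) (simp_all add: F1_def Ev_Past)
        also have "\<dots> = prob Past * P (A t y - A s y)"
          unfolding Past_def P_def by (rule integral_frozen_clock[OF h st C elim])
        also have "\<dots> = (\<integral>\<omega>. indicator Past \<omega> * P (max 0 (A t y - A s y)) \<partial>M)"
          using Past \<open>A s y \<le> A t y\<close> by simp
        also have "\<dots> = (\<integral>\<omega>. F2 y \<omega> \<partial>M)"
          by (rule Bochner_Integration.integral_cong) (simp_all add: F2_def Ev_Past)
        finally show ?thesis .
      qed
    qed
  qed
  also have "\<dots> = (\<integral>\<omega>\<in>D. P (max 0 (A t \<omega> - A s \<omega>)) \<partial>M)"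
    unfolding set_lebesgue_integral_def iterated2(1)[symmetric]
    by (rule Bochner_Integration.integral_cong) (simp_all add: F2_def D_iff)
  finally show ?thesis .
qed

lemma cond_exp_increment:
  fixes h :: "int \<Rightarrow> real"
  assumes h: "\<And>z. \<bar>h z\<bar> \<le> B" and st: "0 \<le> s" "s \<le> t"
  shows "AE \<omega> in M. real_cond_exp M (cox_filtration s) (\<lambda>\<omega>. h (int (N\<^sub>A t \<omega>) - int (N\<^sub>A s \<omega>))) \<omega>
    = (\<Sum>k. h (int k) * ((A t \<omega> - A s \<omega>) ^ k / fact k * exp (- (A t \<omega> - A s \<omega>))))"
proof -
  define P where "P x = (\<Sum>k. h (int k) * (x ^ k / fact k * exp (- x)))" for x
  have P_bound: "\<bar>P (max 0 x)\<bar> \<le> B" for x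
    unfolding P_def by (rule abs_poisson_mean_le) (simp_all add: h)
  have [measurable]: "N\<^sub>A t \<in> measurable M (count_space UNIV)" "N\<^sub>A s \<in> measurable M (count_space UNIV)"
    using st by (auto intro: N_A_measurable)
  have [measurable]: "A t \<in> borel_measurable (cox_filtration s)" "A s \<in> borel_measurable (cox_filtration s)"
    using st by (auto intro: A_adapted)
  have P_adapted: "(\<lambda>\<omega>. P (max 0 (A t \<omega> - A s \<omega>))) \<in> borel_measurable (cox_filtration s)"
    unfolding P_def by measurable
  have "AE \<omega> in M. real_cond_exp M (cox_filtration s) (\<lambda>\<omega>. h (int (N\<^sub>A t \<omega>) - int (N\<^sub>A s \<omega>))) \<omega>
      = P (max 0 (A t \<omega> - A s \<omega>))"
  proof (rule real_cond_exp_eq_on_generator[OF subalgebra_cox_filtration Int_stable_cylinder_events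
        cylinder_events_sets space_cylinder_events cox_filtration_generated_by_cylinder_events])
    show "integrable M (\<lambda>\<omega>. h (int (N\<^sub>A t \<omega>) - int (N\<^sub>A s \<omega>)))"
      by (rule integrable_const_bound[where B=B]) (simp_all add: h)
    show "integrable M (\<lambda>\<omega>. P (max 0 (A t \<omega> - A s \<omega>)))"
      using measurable_from_subalg[OF subalgebra_cox_filtration P_adapted]
      by (intro integrable_const_bound[where B=B]) (simp_all add: P_bound)
  qed (use P_adapted set_integral_increment_cylinder[OF h st] in \<open>simp_all add: P_def\<close>)
  moreover have "AE \<omega> in M. P (max 0 (A t \<omega> - A s \<omega>)) = P (A t \<omega> - A s \<omega>)"
    using A_mono_AE by eventually_elim (use st in auto)
  ultimately show ?thesis
    by eventually_elim (simp add: P_def)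
qed

lemma cond_prob_increment:
  assumes "0 \<le> s" "s \<le> t"
  shows "AE \<omega> in M. real_cond_exp M (cox_filtration s) (indicator {\<omega>. int (N\<^sub>A t \<omega>) - int (N\<^sub>A s \<omega>) = int k}) \<omega>
    = (A t \<omega> - A s \<omega>) ^ k / fact k * exp (- (A t \<omega> - A s \<omega>))"
proof -
  define h where "h z = (if z = int k then 1 else 0 :: real)" for z
  have h_bound: "\<bar>h z\<bar> \<le> 1" for z
    by (simp add: h_def)
  have indicator_eq: "indicator {\<omega>. int (N\<^sub>A t \<omega>) - int (N\<^sub>A s \<omega>) = int k} = (\<lambda>\<omega>. h (int (N\<^sub>A t \<omega>) - int (N\<^sub>A s \<omega>)))"
    by (simp add: fun_eq_iff h_def indicator_def)
  have series: "(\<Sum>j. h (int j) * (x ^ j / fact j * exp (- x))) = x ^ k / fact k * exp (- x)" for x :: real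
  proof -
    have "(\<lambda>j. h (int j) * (x ^ j / fact j * exp (- x))) = (\<lambda>j. if j = k then x ^ j / fact j * exp (- x) else 0)"
      by (simp add: fun_eq_iff h_def)
    then show ?thesis
      using sums_unique[OF sums_single[of k "\<lambda>j. x ^ j / fact j * exp (- x)"]] by simp
  qed
  show ?thesis
    unfolding indicator_eq using cond_exp_increment[where h=h, OF h_bound assms] unfolding series .
qed

lemma cond_char_fun_increment:
  assumes "0 \<le> s" "s \<le> t"
  shows "AE \<omega> in M. real_cond_exp M (cox_filtration s) (\<lambda>\<omega>. cos (u * (real (N\<^sub>A t \<omega>) - real (N\<^sub>A s \<omega>)))) \<omega>
      = Re (exp (complex_of_real (A t \<omega> - A s \<omega>) * (exp (\<i> * complex_of_real u) - 1)))"
    and "AE \<omega> in M. real_cond_exp M (cox_filtration s) (\<lambda>\<omega>. sin (u * (real (N\<^sub>A t \<omega>) - real (N\<^sub>A s \<omega>)))) \<omega>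
      = Im (exp (complex_of_real (A t \<omega> - A s \<omega>) * (exp (\<i> * complex_of_real u) - 1)))"
proof -
  have cos_eq: "(\<lambda>\<omega>. cos (u * (real (N\<^sub>A t \<omega>) - real (N\<^sub>A s \<omega>)))) = (\<lambda>\<omega>. cos (u * of_int (int (N\<^sub>A t \<omega>) - int (N\<^sub>A s \<omega>))))"
    and sin_eq: "(\<lambda>\<omega>. sin (u * (real (N\<^sub>A t \<omega>) - real (N\<^sub>A s \<omega>)))) = (\<lambda>\<omega>. sin (u * of_int (int (N\<^sub>A t \<omega>) - int (N\<^sub>A s \<omega>))))"
    by simp_all
  have cos_series: "(\<Sum>k. cos (u * of_int (int k)) * (x ^ k / fact k * exp (- x)))
      = Re (exp (complex_of_real x * (exp (\<i> * complex_of_real u) - 1)))"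
    and sin_series: "(\<Sum>k. sin (u * of_int (int k)) * (x ^ k / fact k * exp (- x)))
      = Im (exp (complex_of_real x * (exp (\<i> * complex_of_real u) - 1)))" for x
    unfolding of_int_of_nat_eq by (rule sums_unique[OF poisson_cos_sums, symmetric] sums_unique[OF poisson_sin_sums, symmetric])+
  show "AE \<omega> in M. real_cond_exp M (cox_filtration s) (\<lambda>\<omega>. cos (u * (real (N\<^sub>A t \<omega>) - real (N\<^sub>A s \<omega>)))) \<omega>
      = Re (exp (complex_of_real (A t \<omega> - A s \<omega>) * (exp (\<i> * complex_of_real u) - 1)))"
    unfolding cos_eq using cond_exp_increment[of "\<lambda>z. cos (u * of_int z)" 1, OF _ assms]
    unfolding cos_series by simp
  show "AE \<omega> in M. real_cond_exp M (cox_filtration s) (\<lambda>\<omega>. sin (u * (real (N\<^sub>A t \<omega>) - real (N\<^sub>A s \<omega>)))) \<omega>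
      = Im (exp (complex_of_real (A t \<omega> - A s \<omega>) * (exp (\<i> * complex_of_real u) - 1)))"
    unfolding sin_eq using cond_exp_increment[of "\<lambda>z. sin (u * of_int z)" 1, OF _ assms]
    unfolding sin_series by simp
qed

lemma cox_process_time_change:
  assumes "AE \<omega> in M. \<forall>t\<ge>0. continuous (at_right t) (\<lambda>s. A s \<omega>)"
  shows "cox_process M cox_filtration N\<^sub>A A"
  unfolding cox_process_def
  using subalgebra_cox_filtration cox_filtration_mono N_A_adapted A_adapted A_mono_AE assms cond_prob_increment
  by blast

end

lemma inverse_subordinator_clock:
  assumes "prob_space M" and L: "stable_subordinator \<alpha> M L"
    and lam_nonneg: "\<And>x. 0 \<le> x \<Longrightarrow> 0 \<le> lam x"
    and lam_integrable: "\<And>t. 0 \<le> t \<Longrightarrow> set_integrable lborel {0..t} lam"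
  shows "inverse_subordinator L t \<in> borel_measurable M"
    and "AE \<omega> in M. \<forall>s t. 0 \<le> s \<longrightarrow> s \<le> t \<longrightarrow>
      cum_intensity lam (inverse_subordinator L s \<omega>) \<le> cum_intensity lam (inverse_subordinator L t \<omega>)"
    and "AE \<omega> in M. \<forall>t\<ge>0. continuous (at_right t) (\<lambda>s. cum_intensity lam (inverse_subordinator L s \<omega>))"
proof -
  have L_measurable: "\<And>t. L t \<in> borel_measurable M"
    and L_mono: "\<And>\<omega> s t. \<omega> \<in> space M \<Longrightarrow> 0 \<le> s \<Longrightarrow> s \<le> t \<Longrightarrow> L s \<omega> \<le> L t \<omega>"
    using L unfolding stable_subordinator_def levy_process_def by auto
  show "inverse_subordinator L t \<in> borel_measurable M"
    by (rule measurable_inverse_subordinator[OF L_measurable L_mono])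
  have unbounded: "AE \<omega> in M. \<forall>t. \<exists>u\<ge>0. t < L u \<omega>"
    by (rule stable_subordinator_unbounded[OF assms(1) L])
  then show "AE \<omega> in M. \<forall>s t. 0 \<le> s \<longrightarrow> s \<le> t \<longrightarrow>
      cum_intensity lam (inverse_subordinator L s \<omega>) \<le> cum_intensity lam (inverse_subordinator L t \<omega>)"
  proof eventually_elim
    case (elim \<omega>)
    have "inverse_subordinator L s \<omega> \<le> inverse_subordinator L t \<omega>" if "s \<le> t" for s t
      using elim that by (intro inverse_subordinator_mono[where L=L]) auto
    then show ?case
      using cum_intensity_mono[OF lam_nonneg lam_integrable] by blast
  qed
  have Lam_isCont: "isCont (cum_intensity lam) x" for x
    using continuous_cum_intensity[OF lam_integrable] by (simp add: continuous_on_eq_continuous_at)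
  show "AE \<omega> in M. \<forall>t\<ge>0. continuous (at_right t) (\<lambda>s. cum_intensity lam (inverse_subordinator L s \<omega>))"
    using unbounded
  proof eventually_elim
    case (elim \<omega>)
    show ?case
      using continuous_within_compose3[OF Lam_isCont inverse_subordinator_right_cont[where L=L, OF elim]] by blast
  qed
qed

lemma poisson_time_change_inverse_subordinator:
  assumes "prob_space M" and N: "std_poisson_process M N" and L: "stable_subordinator \<alpha> M L"
    and lam_nonneg: "\<And>x. 0 \<le> x \<Longrightarrow> 0 \<le> lam x"
    and lam_integrable: "\<And>t. 0 \<le> t \<Longrightarrow> set_integrable lborel {0..t} lam"
    and indep: "prob_space.indep_set M (sets (gen_sigma M {0..} (inverse_subordinator L) borel))
        (sets (gen_sigma M {0..} N (count_space UNIV)))"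
  shows "poisson_time_change M N (gen_sigma M {0..} (inverse_subordinator L) borel)
      (\<lambda>t \<omega>. cum_intensity lam (inverse_subordinator L t \<omega>))"
proof (intro poisson_time_change.intro unit_poisson_process.intro poisson_time_change_axioms.intro)
  note clock = inverse_subordinator_clock[OF assms(1) L lam_nonneg lam_integrable]
  show "subalgebra M (gen_sigma M {0..} (inverse_subordinator L) borel)"
    using clock(1) by (rule subalgebra_gen_sigma)
  show "(\<lambda>\<omega>. cum_intensity lam (inverse_subordinator L t \<omega>))
      \<in> borel_measurable (gen_sigma M {0..} (inverse_subordinator L) borel)" if "0 \<le> t" for t
  proof (rule measurable_compose[OF _ borel_measurable_continuous_onI[OF continuous_cum_intensity[OF lam_integrable]]])
    show "inverse_subordinator L t \<in> borel_measurable (gen_sigma M {0..} (inverse_subordinator L) borel)"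
      using that by (intro measurable_gen_sigma) auto
  qed
  show "0 \<le> cum_intensity lam (inverse_subordinator L t \<omega>)" for t \<omega>
    by (rule cum_intensity_nonneg[OF lam_nonneg])
  show "AE \<omega> in M. \<forall>s t. 0 \<le> s \<longrightarrow> s \<le> t \<longrightarrow>
      cum_intensity lam (inverse_subordinator L s \<omega>) \<le> cum_intensity lam (inverse_subordinator L t \<omega>)"
    by (rule clock(2))
qed (simp_all add: assms(1) N indep unit_poisson_process_axioms_def)

theorem mainTheorem1:
  fixes M :: "'a measure"
    and N1 :: "real \<Rightarrow> 'a \<Rightarrow> nat"
    and lam :: "real \<Rightarrow> real"
    and \<alpha> :: real
    and L :: "real \<Rightarrow> 'a \<Rightarrow> real"
  assumes "prob_space M"
    and N1: "std_poisson_process M N1"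
    and lam_pos: "\<forall>x\<ge>0. 0 < lam x"
    and lam_loc_int: "\<forall>t\<ge>0. set_integrable lborel {0..t} lam"
    and Lam_infty: "filterlim (cum_intensity lam) at_top at_top"
    and \<alpha>: "0 < \<alpha>" "\<alpha> < 1"
    and L: "stable_subordinator \<alpha> M L"
    and indep: "prob_space.indep_set M
        (sets (gen_sigma M {0..} (inverse_subordinator L) borel))
        (sets (gen_sigma M {0..} N1 (count_space UNIV)))"
  shows
   "let Y = inverse_subordinator L;
        Lam = cum_intensity lam;
        N\<alpha> = (\<lambda>t \<omega>. N1 (Lam (Y t \<omega>)) \<omega>);
        F = (\<lambda>s. sigma (space M)
               (sets (gen_sigma M {0..} Y borel) \<union>
                sets (gen_sigma M {0..s} N\<alpha> (count_space UNIV))))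
    in cox_process M F N\<alpha> (\<lambda>t \<omega>. Lam (Y t \<omega>)) \<and>
       (\<forall>s t u. 0 \<le> s \<longrightarrow> s \<le> t \<longrightarrow>
          (AE \<omega> in M. real_cond_exp M (F s)
                (\<lambda>\<omega>. cos (u * (real (N\<alpha> t \<omega>) - real (N\<alpha> s \<omega>)))) \<omega>
              = Re (exp (complex_of_real (Lam (Y t \<omega>) - Lam (Y s \<omega>)) * (exp (\<i> * complex_of_real u) - 1)))) \<and>
          (AE \<omega> in M. real_cond_exp M (F s)
                (\<lambda>\<omega>. sin (u * (real (N\<alpha> t \<omega>) - real (N\<alpha> s \<omega>)))) \<omega>
              = Im (exp (complex_of_real (Lam (Y t \<omega>) - Lam (Y s \<omega>)) * (exp (\<i> * complex_of_real u) - 1)))))"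
proof -
  let ?Y = "inverse_subordinator L" and ?Lam = "cum_intensity lam"
  have lam_nonneg: "\<And>x. 0 \<le> x \<Longrightarrow> 0 \<le> lam x"
    using lam_pos by (simp add: less_imp_le)
  have lam_integrable: "\<And>t. 0 \<le> t \<Longrightarrow> set_integrable lborel {0..t} lam"
    using lam_loc_int by simp
  interpret poisson_time_change M N1 "gen_sigma M {0..} ?Y borel" "\<lambda>t \<omega>. ?Lam (?Y t \<omega>)"
    by (rule poisson_time_change_inverse_subordinator[OF assms(1) N1 L lam_nonneg lam_integrable indep])
  have cox: "cox_process M cox_filtration N\<^sub>A (\<lambda>t \<omega>. ?Lam (?Y t \<omega>))"
    using inverse_subordinator_clock(3)[OF assms(1) L lam_nonneg lam_integrable]
    by (rule cox_process_time_change)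
  have F_eq: "sigma (space M) (sets (gen_sigma M {0..} ?Y borel) \<union>
      sets (gen_sigma M {0..s} (\<lambda>t \<omega>. N1 (?Lam (?Y t \<omega>)) \<omega>) (count_space UNIV))) = cox_filtration s" for s
    by (simp add: cox_filtration_def)
  show ?thesis
    unfolding Let_def F_eq using cox cond_char_fun_increment by blast
qed

end
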